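(* Let $3\le k\le n-1$ and let $T$ be a tree attaining the maximum value of $M_2$ over $\mathcal{CT}_{n,k}$. If $u$ is a vertex of degree $3$ in $T$, then $u$ has at most one branching neighbor.
   Context: A chemical tree is a tree with maximum degree at most $4$. A branching vertex is a vertex of degree greater than $2$. A segment of a tree is a path of positive length neither of whose end vertices has degree $2$ and all of whose internal vertices have degree $2$. $\mathcal{CT}_{n,k}$ is the class of all $n$-vertex chemical trees with exactly $k$ segments. $M_2(G)=\sum_{uv\in E(G)}d_ud_v$, where $d_v$ is the degree of $v$. *)

theory Defs
  imports Main
begin

definition graph :: "'a set \<Rightarrow> 'a set set \<Rightarrow> bool" where
  "graph V E \<longleftrightarrow> finite V \<and> (\<forall>e\<in>E. e \<subseteq> V \<and> card e = 2)"

definition deg :: "'a set set \<Rightarrow> 'a \<Rightarrow> nat" where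
  "deg E v = card {e \<in> E. v \<in> e}"

definition walk :: "'a set set \<Rightarrow> 'a list \<Rightarrow> bool" where
  "walk E p \<longleftrightarrow> p \<noteq> [] \<and> (\<forall>i. Suc i < length p \<longrightarrow> {p ! i, p ! Suc i} \<in> E)"

definition gpath :: "'a set set \<Rightarrow> 'a list \<Rightarrow> bool" where
  "gpath E p \<longleftrightarrow> walk E p \<and> distinct p"

definition gconnected :: "'a set \<Rightarrow> 'a set set \<Rightarrow> bool" where
  "gconnected V E \<longleftrightarrow> (\<forall>u\<in>V. \<forall>v\<in>V. \<exists>p. gpath E p \<and> hd p = u \<and> last p = v)"

definition gcycle :: "'a set set \<Rightarrow> 'a list \<Rightarrow> bool" where
  "gcycle E p \<longleftrightarrow> length p \<ge> 3 \<and> gpath E p \<and> {last p, hd p} \<in> E"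

definition tree :: "'a set \<Rightarrow> 'a set set \<Rightarrow> bool" where
  "tree V E \<longleftrightarrow> graph V E \<and> V \<noteq> {} \<and> gconnected V E \<and> \<not> (\<exists>p. gcycle E p)"

definition chemical_tree :: "'a set \<Rightarrow> 'a set set \<Rightarrow> bool" where
  "chemical_tree V E \<longleftrightarrow> tree V E \<and> (\<forall>v\<in>V. deg E v \<le> 4)"

definition segment :: "'a set set \<Rightarrow> 'a list \<Rightarrow> bool" where
  "segment E p \<longleftrightarrow> gpath E p \<and> length p \<ge> 2 \<and> deg E (hd p) \<noteq> 2 \<and> deg E (last p) \<noteq> 2
     \<and> (\<forall>i. 0 < i \<and> i < length p - 1 \<longrightarrow> deg E (p ! i) = 2)"

definition segments :: "'a set set \<Rightarrow> 'a set set" where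
  "segments E = {set p | p. segment E p}"

definition in_CT :: "'a set \<Rightarrow> 'a set set \<Rightarrow> nat \<Rightarrow> nat \<Rightarrow> bool" where
  "in_CT V E n k \<longleftrightarrow> chemical_tree V E \<and> card V = n \<and> card (segments E) = k"

definition M2 :: "'a set set \<Rightarrow> nat" where
  "M2 E = (\<Sum>e\<in>E. \<Prod>v\<in>e. deg E v)"

end

theory Submission
  imports Defs
begin

text \<open>Suppose the degree 3 vertex u had two branching neighbours v and w. We build a
  chemical tree on the same vertices with the same number of segments and a larger M2,
  contradicting maximality.

  In a tree the segments correspond two to one to the pairs (z, y) of a vertex z of degree
  other than 2 and a neighbour y of z, so twice the number of segments is the degree sum over
  the vertices of degree other than 2. Two operations preserve this quantity:
  \<^item> switching the edges uv and qb to ub and qv keeps every degree and changes M2 by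
    (deg q - deg u) (deg v - deg b);
  \<^item> if u, v and a vertex t on u's side of uv all have degree 3, moving the two other
    branches of v to u and to t turns these degrees into 4, 1, 4 and raises M2.

  If v and w have degree 3, the second operation applies with t = w. If w has degree 4,
  follow a path from u through w to a leaf, let q be its last vertex of degree 4 and b the
  vertex after q: either deg b < deg v and the switch applies, or deg v = deg b = 3 and the
  second operation applies with t = b.\<close>

section \<open>Neighbours and reachability\<close>

definition nbrs :: "'a set set \<Rightarrow> 'a \<Rightarrow> 'a set" where
  "nbrs E z = {y. {z, y} \<in> E}"

definition reach :: "'a set set \<Rightarrow> 'a \<Rightarrow> 'a \<Rightarrow> bool" where
  "reach E = (\<lambda>x y. {x, y} \<in> E)\<^sup>*\<^sup>*"

lemma graph_finite_edges: "graph V E \<Longrightarrow> finite E"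
  unfolding graph_def by (meson Pow_iff finite_Pow_iff rev_finite_subset subsetI)

lemma graph_edgeD: "graph V E \<Longrightarrow> {x, y} \<in> E \<Longrightarrow> x \<in> V \<and> y \<in> V \<and> x \<noteq> y"
  unfolding graph_def by fastforce

lemma graph_edge_cases:
  assumes "graph V E" "e \<in> E" "z \<in> e" obtains y where "e = {z, y}" "y \<in> nbrs E z"
proof -
  obtain a b where "e = {a, b}" using assms(1,2) unfolding graph_def by (meson card_2_iff)
  then have "e = {z, if z = a then b else a}" using assms(3) by auto
  then show thesis using that assms(2) unfolding nbrs_def by simp
qed

lemma finite_nbrs:
  assumes g: "graph V E" shows "finite (nbrs E z)"
proof -
  have "nbrs E z \<subseteq> V" unfolding nbrs_def using graph_edgeD[OF g] by fastforce
  then show ?thesis using g unfolding graph_def by (auto intro: finite_subset)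
qed

lemma deg_eq_card_nbrs:
  assumes g: "graph V E" shows "deg E z = card (nbrs E z)"
proof -
  have "bij_betw (\<lambda>y. {z, y}) (nbrs E z) {e \<in> E. z \<in> e}"
  proof (rule bij_betwI')
    fix x y assume "x \<in> nbrs E z" "y \<in> nbrs E z"
    then have "z \<noteq> x" "z \<noteq> y" using graph_edgeD[OF g] unfolding nbrs_def by auto
    then show "({z, x} = {z, y}) = (x = y)" by (auto simp: doubleton_eq_iff)
  next
    fix e assume "e \<in> {e \<in> E. z \<in> e}"
    then obtain y where "e = {z, y}" "y \<in> nbrs E z" using graph_edge_cases[OF g] by blast
    then show "\<exists>y \<in> nbrs E z. e = {z, y}" by blast
  qed (auto simp: nbrs_def)
  then show ?thesis unfolding deg_def by (simp add: bij_betw_same_card)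
qed

lemma deg_pos: "graph V E \<Longrightarrow> {z, y} \<in> E \<Longrightarrow> 0 < deg E z"
  by (metis card_gt_0_iff deg_eq_card_nbrs empty_iff finite_nbrs mem_Collect_eq nbrs_def)

lemma deg2_nbrs_cases:
  assumes g: "graph V E" and d: "deg E x = 2" and "{x, a} \<in> E" "{x, b} \<in> E" "{x, c} \<in> E"
  shows "a = b \<or> a = c \<or> b = c"
proof (rule ccontr)
  assume "\<not> ?thesis"
  then have "card {a, b, c} = 3" by auto
  moreover have "{a, b, c} \<subseteq> nbrs E x" using assms unfolding nbrs_def by auto
  then have "card {a, b, c} \<le> card (nbrs E x)" by (rule card_mono[OF finite_nbrs[OF g]])
  ultimately have "3 \<le> card (nbrs E x)" by simp
  then show False using d deg_eq_card_nbrs[OF g] by simp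
qed

lemma deg3_nbrsE:
  assumes g: "graph V E" and d: "deg E z = 3" and a: "a \<in> nbrs E z"
  obtains b c where "nbrs E z = {a, b, c}" "a \<noteq> b" "a \<noteq> c" "b \<noteq> c"
proof -
  have "card (nbrs E z - {a}) = 2"
    using d a finite_nbrs[OF g] deg_eq_card_nbrs[OF g] by (simp add: card_Diff_singleton)
  then obtain b c where bc: "nbrs E z - {a} = {b, c}" "b \<noteq> c" by (meson card_2_iff)
  then have "nbrs E z = {a, b, c}" using a by blast
  moreover have "a \<noteq> b" "a \<noteq> c" using bc by blast+
  ultimately show thesis using that bc(2) by blast
qed

lemma reach_refl [simp]: "reach E x x"
  unfolding reach_def by simp

lemma reach_edge: "{x, y} \<in> E \<Longrightarrow> reach E x y"
  unfolding reach_def by auto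

lemma reach_trans: "reach E x y \<Longrightarrow> reach E y z \<Longrightarrow> reach E x z"
  unfolding reach_def by (rule rtranclp_trans)

lemma reach_sym: "reach E x y \<Longrightarrow> reach E y x"
  unfolding reach_def
  by (metis (no_types, lifting) insert_commute sympD sympI symp_rtranclp)

lemma reach_mono:
  assumes "reach E x y" "E \<subseteq> F" shows "reach F x y"
proof -
  have "(\<lambda>x y. {x, y} \<in> E) \<le> (\<lambda>x y. {x, y} \<in> F)" using assms(2) by auto
  then show ?thesis using assms(1) rtranclp_mono unfolding reach_def by blast
qed

lemma reach_doubleton: "reach F a b \<Longrightarrow> {a, b} = {x, y} \<Longrightarrow> reach F x y"
  by (auto simp: doubleton_eq_iff intro: reach_sym)

lemma reach_in_V:
  assumes g: "graph V E" and r: "reach E x y" and x: "x \<in> V"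
  shows "y \<in> V"
  using r unfolding reach_def
proof (induction rule: rtranclp_induct)
  case (step y z)
  then show ?case using graph_edgeD[OF g step(2)] by simp
qed (rule x)

lemma reach_if_edges_reach:
  assumes "\<And>x y. {x, y} \<in> E \<Longrightarrow> reach F x y" "reach E x y"
  shows "reach F x y"
  using assms(2) unfolding reach_def[of E]
  by (induction rule: rtranclp_induct) (auto intro: reach_trans assms(1))

lemma reach_avoiding_neq:
  assumes "reach {e \<in> E. v \<notin> e} u t" "u \<noteq> v" shows "t \<noteq> v"
  using assms unfolding reach_def by (cases rule: rtranclp.cases) auto

lemma hd_last_conv_nth: "p \<noteq> [] \<Longrightarrow> hd p = p ! 0 \<and> last p = p ! (length p - 1)"
  by (simp add: hd_conv_nth last_conv_nth)

lemma reach_nth: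
  assumes "\<forall>j. l \<le> j \<and> j < r \<longrightarrow> {p ! j, p ! Suc j} \<in> F" "l \<le> r"
  shows "reach F (p ! l) (p ! r)"
  using assms
proof (induction r)
  case (Suc r)
  then show ?case
    by (cases "l = Suc r") (auto intro: reach_trans[OF _ reach_edge])
qed simp

lemma walk_reach:
  assumes w: "walk E p" shows "reach E (hd p) (last p)"
proof -
  have "p \<noteq> []" using w unfolding walk_def by simp
  moreover have "reach E (p ! 0) (p ! (length p - 1))"
    by (rule reach_nth) (use w in \<open>auto simp: walk_def\<close>)
  ultimately show ?thesis by (simp add: hd_last_conv_nth)
qed

lemma walk_avoiding: "walk E p \<Longrightarrow> x \<notin> set p \<Longrightarrow> walk {e \<in> E. x \<notin> e} p"
  unfolding walk_def by (auto dest: nth_mem)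

lemma gpath_drop: "gpath E p \<Longrightarrow> j < length p \<Longrightarrow> gpath E (drop j p)"
  unfolding gpath_def walk_def by auto

lemma gpath_take: "gpath E p \<Longrightarrow> 0 < j \<Longrightarrow> gpath E (take j p)"
  unfolding gpath_def walk_def by auto

lemma gpath_snoc:
  assumes "gpath E p" "{last p, r} \<in> E" "r \<notin> set p"
  shows "gpath E (p @ [r])"
proof -
  have "{(p @ [r]) ! i, (p @ [r]) ! Suc i} \<in> E" if "Suc i < Suc (length p)" for i
  proof (cases "Suc i < length p")
    case True
    then show ?thesis using assms(1) unfolding gpath_def walk_def by (simp add: nth_append)
  next
    case False
    then have "i = length p - 1" "p \<noteq> []" using that assms(1) unfolding gpath_def walk_def by auto
    then show ?thesis using assms(2) by (simp add: nth_append last_conv_nth)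
  qed
  then show ?thesis using assms unfolding gpath_def walk_def by auto
qed

lemma gpath_rev:
  assumes p: "gpath E p" shows "gpath E (rev p)"
proof -
  have "{rev p ! i, rev p ! Suc i} \<in> E" if i: "Suc i < length p" for i
  proof -
    let ?j = "length p - Suc (Suc i)"
    have "{p ! ?j, p ! Suc ?j} \<in> E" using p i unfolding gpath_def walk_def by simp
    moreover have "Suc ?j = length p - Suc i" using i by simp
    ultimately show ?thesis using i by (simp add: rev_nth insert_commute)
  qed
  then show ?thesis using p unfolding gpath_def walk_def by simp
qed

lemma reach_gpath:
  assumes "reach E x y" shows "\<exists>p. gpath E p \<and> hd p = x \<and> last p = y"
  using assms unfolding reach_def
proof (induction rule: converse_rtranclp_induct)
  case base
  show ?case by (intro exI[of _ "[y]"]) (auto simp: gpath_def walk_def)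
next
  case (step x z)
  then obtain p where p: "gpath E p" "hd p = z" "last p = y" by blast
  show ?case
  proof (cases "x \<in> set p")
    case True
    then obtain ys zs where s: "p = ys @ x # zs" by (meson split_list)
    then have "gpath E (x # zs)" using gpath_drop[OF p(1), of "length ys"] by simp
    then show ?thesis using p(3) s by (intro exI[of _ "x # zs"]) auto
  next
    case False
    have "p \<noteq> []" using p(1) unfolding gpath_def walk_def by simp
    then have "gpath E (x # p)" using p step(1) False unfolding gpath_def walk_def
      by (auto simp: nth_Cons hd_conv_nth split: nat.split)
    then show ?thesis using p \<open>p \<noteq> []\<close> by (intro exI[of _ "x # p"]) auto
  qed
qed

lemma gconnected_iff_reach: "gconnected V E \<longleftrightarrow> (\<forall>x\<in>V. \<forall>y\<in>V. reach E x y)"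
proof -
  have "(\<exists>p. gpath E p \<and> hd p = x \<and> last p = y) \<longleftrightarrow> reach E x y" for x y
    using reach_gpath[of E x y] walk_reach[of E] unfolding gpath_def by auto
  then show ?thesis unfolding gconnected_def by simp
qed

lemma walk_set_subset:
  assumes g: "graph V E" and w: "walk E p" and l: "2 \<le> length p"
  shows "set p \<subseteq> V"
proof
  fix x assume "x \<in> set p"
  then obtain i where i: "i < length p" "p ! i = x" by (meson in_set_conv_nth)
  show "x \<in> V"
  proof (cases "Suc i < length p")
    case True
    then have "{p ! i, p ! Suc i} \<in> E" using w unfolding walk_def by simp
    then show ?thesis using graph_edgeD[OF g] i by simp
  next
    case False
    then have "Suc (i - 1) < length p" "Suc (i - 1) = i" using i l by auto
    then have "{p ! (i - 1), p ! i} \<in> E" using w unfolding walk_def by metis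
    then show ?thesis using graph_edgeD[OF g] i by simp
  qed
qed

lemma length_gpath_le_card:
  assumes g: "graph V E" and p: "gpath E p" "2 \<le> length p"
  shows "length p \<le> card V"
proof -
  have "set p \<subseteq> V" using walk_set_subset[OF g _ p(2)] p(1) unfolding gpath_def by simp
  then have "card (set p) \<le> card V" using g unfolding graph_def by (simp add: card_mono)
  then show ?thesis using p(1) unfolding gpath_def by (simp add: distinct_card)
qed

section \<open>Paths and cycles in trees\<close>

lemma tree_graph: "tree V E \<Longrightarrow> graph V E"
  unfolding tree_def by simp

lemma tree_edge_bridge:
  assumes t: "tree V E" and e: "{a, b} \<in> E"
  shows "\<not> reach (E - {{a, b}}) a b"
proof
  assume "reach (E - {{a, b}}) a b"
  from reach_gpath[OF this] obtain p where p: "gpath (E - {{a, b}}) p" "hd p = a" "last p = b"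
    by blast
  have ab: "a \<noteq> b" using graph_edgeD[OF tree_graph[OF t] e] by simp
  have "p \<noteq> []" using p unfolding gpath_def walk_def by simp
  then have "length p \<noteq> 1" using p ab by (cases p) auto
  moreover have "length p \<noteq> 2"
  proof
    assume l: "length p = 2"
    then have "{p ! 0, p ! Suc 0} \<in> E - {{a, b}}" using p(1) unfolding gpath_def walk_def by simp
    moreover have "p ! 0 = a" using p(2) \<open>p \<noteq> []\<close> by (simp add: hd_conv_nth)
    moreover have "p ! Suc 0 = b" using p(3) l \<open>p \<noteq> []\<close> by (simp add: last_conv_nth)
    ultimately show False by simp
  qed
  moreover have "length p \<noteq> 0" using \<open>p \<noteq> []\<close> by simp
  ultimately have "3 \<le> length p" by arith
  moreover have "gpath E p" using p(1) unfolding gpath_def walk_def by auto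
  moreover have "{last p, hd p} \<in> E" using p(2,3) e by (simp add: insert_commute)
  ultimately have "gcycle E p" unfolding gcycle_def by simp
  then show False using t unfolding tree_def by blast
qed

lemma distinct_hd_eq_last: "distinct p \<Longrightarrow> p \<noteq> [] \<Longrightarrow> hd p = last p \<Longrightarrow> p = [hd p]"
proof (cases p)
  case (Cons a q)
  assume "distinct p" "hd p = last p"
  then show ?thesis using Cons last_in_set[of q] by (cases "q = []") auto
qed simp

lemma tree_gpaths_second_vertex:
  assumes t: "tree V E" and p: "gpath E (x # p)" "p \<noteq> []" and q: "gpath E (x # q)" "q \<noteq> []"
    and l: "last p = last q"
  shows "hd p = hd q"
proof (rule ccontr)
  assume ne: "hd p \<noteq> hd q"
  have xp: "x \<notin> set p" and xq: "x \<notin> set q" using p(1) q(1) by (simp_all add: gpath_def)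
  have e: "{x, hd p} \<in> E" "{x, hd q} \<in> E"
    using p q unfolding gpath_def walk_def by (auto simp: hd_conv_nth)
  have gp: "gpath E p" "gpath E q"
    using gpath_drop[OF p(1), of 1] gpath_drop[OF q(1), of 1] p(2) q(2) by simp_all
  let ?F = "E - {{x, hd p}}"
  have sub: "{e \<in> E. x \<notin> e} \<subseteq> ?F" by auto
  have "reach {e \<in> E. x \<notin> e} (hd p) (last p)"
    using walk_reach[OF walk_avoiding[OF _ xp]] gp(1) by (simp add: gpath_def)
  then have r1: "reach ?F (hd p) (last p)" using sub by (rule reach_mono)
  have "reach {e \<in> E. x \<notin> e} (hd q) (last q)"
    using walk_reach[OF walk_avoiding[OF _ xq]] gp(2) by (simp add: gpath_def)
  then have "reach ?F (hd q) (last q)" using sub by (rule reach_mono)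
  then have r2: "reach ?F (last p) (hd q)" using reach_sym l by metis
  have "{hd q, x} \<in> ?F" using e(2) ne by (auto simp: doubleton_eq_iff insert_commute)
  then have "reach ?F (hd p) x" using reach_trans[OF reach_trans[OF r1 r2] reach_edge] by simp
  then show False using tree_edge_bridge[OF t e(1)] reach_sym by metis
qed

lemma tree_gpath_unique:
  assumes t: "tree V E"
  shows "gpath E p \<Longrightarrow> gpath E q \<Longrightarrow> hd p = hd q \<Longrightarrow> last p = last q \<Longrightarrow> p = q"
proof (induction p arbitrary: q)
  case Nil
  then show ?case by (simp add: gpath_def walk_def)
next
  case (Cons x p)
  have "q \<noteq> []" using Cons.prems(2) by (simp add: gpath_def walk_def)
  then obtain q' where q: "q = x # q'" using Cons.prems(3) by (cases q) auto
  show ?case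
  proof (cases "p = []")
    case True
    have "distinct q" using Cons.prems(2) by (simp add: gpath_def)
    then show ?thesis using True Cons.prems(3,4) distinct_hd_eq_last[of q] \<open>q \<noteq> []\<close> by simp
  next
    case False
    have "q' \<noteq> []"
    proof
      assume "q' = []"
      then have "last p = x" using Cons.prems(4) q False by simp
      then show False using Cons.prems(1) last_in_set[OF False] by (simp add: gpath_def)
    qed
    have last_eq: "last p = last q'" using Cons.prems(4) q False \<open>q' \<noteq> []\<close> by simp
    have "gpath E (x # q')" using Cons.prems(2) q by simp
    from tree_gpaths_second_vertex[OF t Cons.prems(1) False this \<open>q' \<noteq> []\<close> last_eq]
    have "hd p = hd q'" .
    moreover have "gpath E p" "gpath E q'"
      using gpath_drop[OF Cons.prems(1), of 1] gpath_drop[OF Cons.prems(2), of 1] False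
        \<open>q' \<noteq> []\<close> q by auto
    ultimately have "p = q'" using Cons.IH last_eq by blast
    then show ?thesis using q by simp
  qed
qed

lemma tree_gpath_snoc:
  assumes t: "tree V E" and p: "gpath E p" "2 \<le> length p"
    and r: "{last p, r} \<in> E" "r \<noteq> p ! (length p - 2)"
  shows "gpath E (p @ [r])"
proof -
  have "r \<notin> set p"
  proof
    assume "r \<in> set p"
    then obtain j where j: "j < length p" "p ! j = r" by (meson in_set_conv_nth)
    have "r \<noteq> last p" using graph_edgeD[OF tree_graph[OF t] r(1)] by auto
    then have "gpath E [r, last p]"
      using r(1) by (auto simp: gpath_def walk_def insert_commute)
    moreover have "gpath E (drop j p)" "hd (drop j p) = r" "last (drop j p) = last p"
      using gpath_drop[OF p(1) j(1)] j by (auto simp: hd_drop_conv_nth)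
    ultimately have "drop j p = [r, last p]" by (intro tree_gpath_unique[OF t]) simp_all
    from arg_cong[OF this, of length] have "j = length p - 2" by simp
    then show False using j r(2) by simp
  qed
  then show ?thesis using gpath_snoc[OF p(1) r(1)] by simp
qed

lemma tree_leaf_path:
  assumes t: "tree V E" and e: "{u, w} \<in> E"
  obtains p where "gpath E p" "2 \<le> length p" "p ! 0 = u" "p ! 1 = w" "deg E (last p) = 1"
proof -
  have g: "graph V E" using t by (rule tree_graph)
  define Q where "Q = {p. gpath E p \<and> 2 \<le> length p \<and> p ! 0 = u \<and> p ! 1 = w}"
  have "[u, w] \<in> Q"
    using e graph_edgeD[OF g e] unfolding Q_def gpath_def walk_def by (auto simp: less_Suc_eq)
  moreover have "\<forall>p. p \<in> Q \<longrightarrow> length p < Suc (card V)"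
    using length_gpath_le_card[OF g] unfolding Q_def by (simp add: less_Suc_eq_le)
  ultimately have "\<exists>p. p \<in> Q \<and> (\<forall>p'. p' \<in> Q \<longrightarrow> length p' \<le> length p)"
    by (rule ex_has_greatest_nat)
  then obtain p where pQ: "p \<in> Q" and pmax: "\<forall>p'. p' \<in> Q \<longrightarrow> length p' \<le> length p"
    by blast
  have p: "gpath E p" "2 \<le> length p" "p ! 0 = u" "p ! 1 = w" "p \<noteq> []"
    using pQ unfolding Q_def by auto
  have "nbrs E (last p) = {p ! (length p - 2)}"
  proof (intro equalityI subsetI)
    fix r assume "r \<in> nbrs E (last p)"
    then have r: "{last p, r} \<in> E" unfolding nbrs_def by simp
    show "r \<in> {p ! (length p - 2)}"
    proof (rule ccontr)
      assume "r \<notin> {p ! (length p - 2)}"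
      then have "gpath E (p @ [r])" using tree_gpath_snoc[OF t p(1,2) r] by simp
      moreover have "(p @ [r]) ! 0 = u" "(p @ [r]) ! 1 = w"
        using p(2-5) by (simp_all add: nth_append)
      ultimately have "p @ [r] \<in> Q" using p(2) unfolding Q_def by simp
      then have "length (p @ [r]) \<le> length p" using pmax by blast
      then show False by simp
    qed
  next
    fix r assume "r \<in> {p ! (length p - 2)}"
    moreover have "{p ! (length p - 2), p ! Suc (length p - 2)} \<in> E"
      using p(1,2) unfolding gpath_def walk_def by simp
    moreover have "Suc (length p - 2) = length p - 1" using p(2) by simp
    ultimately have "{r, last p} \<in> E" using p(5) by (simp add: last_conv_nth)
    then show "r \<in> nbrs E (last p)" unfolding nbrs_def by (simp add: insert_commute)
  qed
  then show thesis using that p deg_eq_card_nbrs[OF g] by simp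
qed

lemma tree_gpath_avoids_nbr:
  assumes t: "tree V E" and P: "gpath E P" "P ! 0 = u" "P ! 1 = w"
    and uv: "{u, v} \<in> E" and vw: "v \<noteq> w"
  shows "v \<notin> set P"
proof
  assume "v \<in> set P"
  then obtain i where i: "i < length P" "P ! i = v" by (meson in_set_conv_nth)
  have "take (Suc i) P \<noteq> []" using i(1) by auto
  then have "hd (take (Suc i) P) = u" "last (take (Suc i) P) = v"
    using hd_last_conv_nth[of "take (Suc i) P"] P(2) i by simp_all
  moreover have "gpath E (take (Suc i) P)" using gpath_take[OF P(1)] by simp
  moreover have "gpath E [u, v]"
    using uv graph_edgeD[OF tree_graph[OF t] uv] by (simp add: gpath_def walk_def)
  ultimately have "take (Suc i) P = [u, v]" by (intro tree_gpath_unique[OF t]) simp_all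
  from arg_cong[OF this, of length] have "i = 1" using i(1) by simp
  then show False using i(2) P(3) vw by simp
qed

lemma gcycle_mono: "gcycle E p \<Longrightarrow> E \<subseteq> F \<Longrightarrow> gcycle F p"
  unfolding gcycle_def gpath_def walk_def by auto

lemma distinct_edges_inj:
  assumes p: "distinct p" and i: "Suc i < length p" and j: "Suc j < length p"
    and eq: "{p ! i, p ! Suc i} = {p ! j, p ! Suc j}"
  shows "i = j"
proof -
  from eq consider "p ! i = p ! j" | "p ! i = p ! Suc j" "p ! Suc i = p ! j"
    by (auto simp: doubleton_eq_iff)
  then show ?thesis
  proof cases
    case 1
    then show ?thesis using nth_eq_iff_index_eq[OF p, of i j] i j by simp
  next
    case 2
    then have "i = Suc j" "Suc i = j"
      using nth_eq_iff_index_eq[OF p, of i "Suc j"] nth_eq_iff_index_eq[OF p, of "Suc i" j] i j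
      by simp_all
    then show ?thesis by simp
  qed
qed

lemma distinct_edge_neq_closing:
  assumes p: "distinct p" "3 \<le> length p" and i: "Suc i < length p"
  shows "{p ! i, p ! Suc i} \<noteq> {last p, hd p}"
proof
  assume eq: "{p ! i, p ! Suc i} = {last p, hd p}"
  have "p \<noteq> []" using p(2) by auto
  then have "last p = p ! (length p - 1)" "hd p = p ! 0" by (simp_all add: hd_last_conv_nth)
  then consider "p ! i = p ! (length p - 1)" | "p ! i = p ! 0" "p ! Suc i = p ! (length p - 1)"
    using eq by (auto simp: doubleton_eq_iff)
  then show False
  proof cases
    case 1
    then have "i = length p - 1" using nth_eq_iff_index_eq[OF p(1), of i "length p - 1"] i by simp
    then show False using i by simp
  next
    case 2
    then have "i = 0" "Suc i = length p - 1"
      using nth_eq_iff_index_eq[OF p(1), of i 0]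
        nth_eq_iff_index_eq[OF p(1), of "Suc i" "length p - 1"] i \<open>p \<noteq> []\<close>
      by simp_all
    then show False using p(2) by simp
  qed
qed

lemma gcycle_closing_edge_reach:
  assumes c: "gcycle F p"
  shows "reach (F - {{last p, hd p}}) (hd p) (last p)"
proof -
  have p: "distinct p" "3 \<le> length p" "\<forall>i. Suc i < length p \<longrightarrow> {p ! i, p ! Suc i} \<in> F"
    using c unfolding gcycle_def gpath_def walk_def by auto
  moreover have "{p ! i, p ! Suc i} \<noteq> {last p, hd p}" if "Suc i < length p" for i
    using distinct_edge_neq_closing[OF p(1,2) that] .
  ultimately have "reach (F - {{last p, hd p}}) (p ! 0) (p ! (length p - 1))"
    by (intro reach_nth) auto
  moreover have "p \<noteq> []" using p(2) by auto
  ultimately show ?thesis by (simp add: hd_last_conv_nth)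
qed

lemma gcycle_edge_reach:
  assumes c: "gcycle F p" and i: "Suc i < length p"
  shows "reach (F - {{p ! i, p ! Suc i}}) (p ! i) (p ! Suc i)"
proof -
  let ?F = "F - {{p ! i, p ! Suc i}}"
  have p: "distinct p" "3 \<le> length p" "\<forall>j. Suc j < length p \<longrightarrow> {p ! j, p ! Suc j} \<in> F"
    "{last p, hd p} \<in> F"
    using c unfolding gcycle_def gpath_def walk_def by auto
  have other: "{p ! j, p ! Suc j} \<in> ?F" if "Suc j < length p" "j \<noteq> i" for j
    using p(3) that distinct_edges_inj[OF p(1) i that(1)] by auto
  have r1: "reach ?F (p ! Suc i) (p ! (length p - 1))"
    using i other by (intro reach_nth) auto
  have "reach ?F (last p) (hd p)"
    using p i distinct_edge_neq_closing[OF p(1,2) i] by (intro reach_edge) auto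
  moreover have "p \<noteq> []" using p(2) by auto
  ultimately have r2: "reach ?F (p ! (length p - 1)) (p ! 0)" by (simp add: hd_last_conv_nth)
  have r3: "reach ?F (p ! 0) (p ! i)"
    using i other by (intro reach_nth) auto
  have "reach ?F (p ! Suc i) (p ! i)" using reach_trans[OF reach_trans[OF r1 r2] r3] .
  then show ?thesis by (rule reach_sym)
qed

lemma gcycle_Diff_bridge:
  assumes c: "gcycle F p" and br: "\<not> reach (F - {{x, y}}) x y"
  shows "gcycle (F - {{x, y}}) p"
proof -
  have "{p ! i, p ! Suc i} \<noteq> {x, y}" if "Suc i < length p" for i
    using gcycle_edge_reach[OF c that] br reach_doubleton[of "F - {{x, y}}"] by auto
  moreover have "{last p, hd p} \<noteq> {x, y}"
    using reach_sym[OF gcycle_closing_edge_reach[OF c]] br reach_doubleton[of "F - {{x, y}}"]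
    by auto
  ultimately show ?thesis using c unfolding gcycle_def gpath_def walk_def by auto
qed

section \<open>Moving an edge\<close>

definition move_edge :: "'a set set \<Rightarrow> 'a \<Rightarrow> 'a \<Rightarrow> 'a \<Rightarrow> 'a set set" where
  "move_edge E a b c = insert {c, b} (E - {{a, b}})"

lemma tree_move_edge:
  assumes t: "tree V E" and ab: "{a, b} \<in> E" and ac: "reach (E - {{a, b}}) a c"
  shows "tree V (move_edge E a b c)"
proof -
  let ?E' = "move_edge E a b c"
  have g: "graph V E" using t by (rule tree_graph)
  have "a \<in> V" "b \<in> V" using graph_edgeD[OF g ab] by auto
  moreover have "c \<in> V" using reach_in_V[OF _ ac \<open>a \<in> V\<close>] g unfolding graph_def by auto
  moreover have cb: "c \<noteq> b" using tree_edge_bridge[OF t ab] ac by auto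
  ultimately have g': "graph V ?E'" using g unfolding graph_def move_edge_def by auto
  have ac': "reach ?E' a c" using reach_mono[OF ac] unfolding move_edge_def by auto
  have edges: "reach ?E' x y" if "{x, y} \<in> E" for x y
  proof (cases "{x, y} = {a, b}")
    case True
    have "reach ?E' c b" unfolding move_edge_def by (intro reach_edge) simp
    then show ?thesis by (rule reach_doubleton[OF reach_trans[OF ac'] True[symmetric]])
  next
    case False
    then show ?thesis using that unfolding move_edge_def by (intro reach_edge) simp
  qed
  have "gconnected V E" using t unfolding tree_def by simp
  then have conn: "gconnected V ?E'"
    unfolding gconnected_iff_reach using reach_if_edges_reach[OF edges] by simp
  have sub: "?E' - {{c, b}} \<subseteq> E - {{a, b}}" unfolding move_edge_def by auto
  have br: "\<not> reach (?E' - {{c, b}}) c b"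
  proof
    assume "reach (?E' - {{c, b}}) c b"
    then have "reach (E - {{a, b}}) a b" using reach_trans[OF ac reach_mono[OF _ sub]] by simp
    then show False using tree_edge_bridge[OF t ab] by simp
  qed
  have acyclic: "\<not> gcycle ?E' p" for p
  proof
    assume "gcycle ?E' p"
    then have "gcycle (?E' - {{c, b}}) p" by (rule gcycle_Diff_bridge[OF _ br])
    moreover have "?E' - {{c, b}} \<subseteq> E" using sub by blast
    ultimately have "gcycle E p" by (rule gcycle_mono)
    then show False using t unfolding tree_def by simp
  qed
  show ?thesis using g' conn acyclic t unfolding tree_def by simp
qed

lemma deg_move_edge:
  assumes fin: "finite E" and ab: "{a, b} \<in> E" and cb: "{c, b} \<notin> E"
    and d: "a \<noteq> b" "c \<noteq> b" "a \<noteq> c"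
  shows "deg (move_edge E a b c) z =
    (if z = a then deg E z - 1 else if z = c then deg E z + 1 else deg E z)"
proof -
  let ?S = "{e \<in> E. z \<in> e}"
  have fS: "finite ?S" using fin by simp
  have S': "{e \<in> move_edge E a b c. z \<in> e} =
    (if z = c \<or> z = b then insert {c, b} else id) (if z = a \<or> z = b then ?S - {{a, b}} else ?S)"
    using d unfolding move_edge_def by auto
  have "card (insert {c, b} (?S - {{a, b}})) = card ?S" if "z = b"
    using that fS ab cb card_Suc_Diff1[OF fS, of "{a, b}"] by simp
  then show ?thesis unfolding deg_def S' using d fS ab cb
    by (auto simp: card_Diff_singleton)
qed

section \<open>Counting segments\<close>

lemma segment_rev:
  assumes p: "segment E p" shows "segment E (rev p)"
proof -
  have inner: "\<forall>i. 0 < i \<and> i < length p - 1 \<longrightarrow> deg E (p ! i) = 2"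
    using p unfolding segment_def by simp
  have "deg E (rev p ! i) = 2" if "0 < i" "i < length p - 1" for i
  proof -
    have "Suc i < length p" "0 < length p - Suc i" "length p - Suc i < length p - 1"
      using that by auto
    then show ?thesis using inner by (simp add: rev_nth)
  qed
  then show ?thesis using p gpath_rev unfolding segment_def
    by (auto simp: hd_rev last_rev)
qed

lemma segment_nonempty: "segment E p \<Longrightarrow> p \<noteq> []"
  unfolding segment_def by auto

lemma deg2_gpaths_agree:
  assumes g: "graph V E" and p: "gpath E p" and q: "gpath E q"
    and start: "p ! 0 = q ! 0" "p ! 1 = q ! 1"
    and inner: "\<forall>i. 0 < i \<and> i \<le> n \<longrightarrow> deg E (p ! i) = 2"
    and n: "Suc n < length p" "Suc n < length q"
  shows "\<forall>i \<le> Suc n. p ! i = q ! i"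
  using inner n
proof (induction n)
  case 0
  then show ?case using start by (simp add: le_Suc_eq)
next
  case (Suc n)
  then have IH: "\<forall>i \<le> Suc n. p ! i = q ! i" by simp
  let ?x = "p ! Suc n"
  have d: "deg E ?x = 2" using Suc.prems(1) by simp
  have "{?x, p ! n} \<in> E" "{?x, p ! Suc (Suc n)} \<in> E" "{?x, q ! Suc (Suc n)} \<in> E"
    using p q Suc.prems IH unfolding gpath_def walk_def by (auto simp: insert_commute)
  note three = deg2_nbrs_cases[OF g d this]
  have "p ! Suc (Suc n) \<noteq> p ! n" "q ! Suc (Suc n) \<noteq> q ! n"
    using p q Suc.prems unfolding gpath_def by (simp_all add: nth_eq_iff_index_eq)
  moreover have "q ! n = p ! n" using IH by simp
  ultimately have "p ! Suc (Suc n) = q ! Suc (Suc n)" using three by auto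
  then show ?case using IH by (auto simp: le_Suc_eq)
qed

lemma segment_inner: "segment E p \<Longrightarrow> 0 < i \<Longrightarrow> i < length p - 1 \<Longrightarrow> deg E (p ! i) = 2"
  unfolding segment_def by simp

lemma segment_length_le:
  assumes g: "graph V E" and p: "segment E p" and q: "segment E q"
    and start: "p ! 0 = q ! 0" "p ! 1 = q ! 1"
  shows "length p \<le> length q"
proof (rule ccontr)
  assume lt: "\<not> length p \<le> length q"
  define n where "n = length q - 2"
  have l: "2 \<le> length q" "Suc n < length q" "Suc n < length p"
    using q lt unfolding segment_def n_def by auto
  have "\<forall>i. 0 < i \<and> i \<le> n \<longrightarrow> deg E (q ! i) = 2"
    using segment_inner[OF q] l unfolding n_def by auto
  moreover have "gpath E q" "gpath E p" using p q unfolding segment_def by simp_all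
  ultimately have "\<forall>i \<le> Suc n. q ! i = p ! i"
    using deg2_gpaths_agree[OF g _ _ start[symmetric] _ l(2,3)] by blast
  then have "q ! Suc n = p ! Suc n" by simp
  moreover have "Suc n = length q - 1" using l(1) unfolding n_def by simp
  then have "q ! Suc n = last q" using hd_last_conv_nth[OF segment_nonempty[OF q]] by simp
  then have "deg E (q ! Suc n) \<noteq> 2" using q unfolding segment_def by simp
  moreover have "Suc n < length p - 1" using l lt by linarith
  then have "deg E (p ! Suc n) = 2" using segment_inner[OF p] by simp
  ultimately show False by simp
qed

lemma segment_eqI:
  assumes g: "graph V E" and p: "segment E p" and q: "segment E q"
    and start: "p ! 0 = q ! 0" "p ! 1 = q ! 1"
  shows "p = q"
proof -
  define n where "n = length p - 2"
  have len: "length p = length q"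
    using segment_length_le[OF g p q start] segment_length_le[OF g q p start[symmetric]] by simp
  have l: "Suc n = length p - 1" "Suc n < length p" "Suc n < length q"
    using p len unfolding segment_def n_def by auto
  have "\<forall>i. 0 < i \<and> i \<le> n \<longrightarrow> deg E (p ! i) = 2"
    using segment_inner[OF p] l unfolding n_def by auto
  moreover have "gpath E p" "gpath E q" using p q unfolding segment_def by simp_all
  ultimately have "\<forall>i \<le> Suc n. p ! i = q ! i"
    using deg2_gpaths_agree[OF g _ _ start _ l(2,3)] by blast
  then show ?thesis using len l(1) by (auto intro: nth_equalityI)
qed

lemma segment_exists:
  assumes t: "tree V E" and e: "{z, y} \<in> E" and dz: "deg E z \<noteq> 2"
  obtains p where "segment E p" "p ! 0 = z" "p ! 1 = y"
proof -
  obtain P where P: "gpath E P" "2 \<le> length P" "P ! 0 = z" "P ! 1 = y" "deg E (last P) = 1"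
    using tree_leaf_path[OF t e] by blast
  define k where "k = (LEAST k. 0 < k \<and> k < length P \<and> deg E (P ! k) \<noteq> 2)"
  have "P \<noteq> []" using P(2) by auto
  then have "0 < length P - 1 \<and> length P - 1 < length P \<and> deg E (P ! (length P - 1)) \<noteq> 2"
    using P by (simp add: last_conv_nth)
  then have k: "0 < k" "k < length P" "deg E (P ! k) \<noteq> 2"
    unfolding k_def by (metis (mono_tags, lifting) LeastI)+
  have inner: "deg E (P ! i) = 2" if "0 < i" "i < k" for i
    using not_less_Least[of i "\<lambda>k. 0 < k \<and> k < length P \<and> deg E (P ! k) \<noteq> 2"] that k(2)
    unfolding k_def by auto
  let ?p = "take (Suc k) P"
  have nth: "?p ! i = P ! i" if "i \<le> k" for i using that by simp
  have len: "length ?p = Suc k" using k(2) by simp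
  then have "?p \<noteq> []" by auto
  then have "hd ?p = P ! 0" "last ?p = P ! k"
    using hd_last_conv_nth[of ?p] nth len by auto
  then have "segment E ?p"
    unfolding segment_def using gpath_take[OF P(1)] P(3) dz k len inner nth by auto
  then show thesis using that P k nth by simp
qed

lemma segment_end_iff:
  assumes p: "segment E p" and x: "x \<in> set p"
  shows "deg E x \<noteq> 2 \<longleftrightarrow> x = hd p \<or> x = last p"
proof
  assume d: "deg E x \<noteq> 2"
  obtain i where i: "i < length p" "p ! i = x" using x by (meson in_set_conv_nth)
  have "\<not> (0 < i \<and> i < length p - 1)" using p i d unfolding segment_def by auto
  then have "i = 0 \<or> i = length p - 1" using i(1) by arith
  then show "x = hd p \<or> x = last p"
    using i(2) hd_last_conv_nth[OF segment_nonempty[OF p]] by auto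
qed (use p in \<open>auto simp: segment_def\<close>)

lemma segment_hd_neq_last:
  assumes p: "segment E p" shows "hd p \<noteq> last p"
proof
  assume "hd p = last p"
  moreover have "distinct p" using p unfolding segment_def gpath_def by simp
  ultimately have "p = [hd p]" using distinct_hd_eq_last segment_nonempty[OF p] by blast
  from arg_cong[OF this, of length] show False using p unfolding segment_def by simp
qed

lemma segment_set_eq:
  assumes t: "tree V E" and p: "segment E p" and q: "segment E q" and s: "set q = set p"
  shows "q = p \<or> q = rev p"
proof -
  have gp: "gpath E p" "gpath E q" using p q unfolding segment_def by simp_all
  have dq: "deg E (hd q) \<noteq> 2" "deg E (last q) \<noteq> 2" using q unfolding segment_def by simp_all
  have "hd q \<in> set q" "last q \<in> set q" using segment_nonempty[OF q] by simp_all
  then have "hd q \<in> set p" "last q \<in> set p" unfolding s .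
  then have hq: "hd q = hd p \<or> hd q = last p" and lq: "last q = hd p \<or> last q = last p"
    using segment_end_iff[OF p] dq by simp_all
  have ne: "hd q \<noteq> last q" by (rule segment_hd_neq_last[OF q])
  show ?thesis
  proof (cases "hd q = hd p")
    case True
    then have "last q = last p" using lq ne by auto
    with True have "q = p" by (rule tree_gpath_unique[OF t gp(2,1)])
    then show ?thesis by simp
  next
    case False
    then have "hd q = last p" "last q = hd p" using hq lq ne by auto
    then have "hd q = hd (rev p)" "last q = last (rev p)" by (simp_all add: hd_rev last_rev)
    then have "q = rev p" by (rule tree_gpath_unique[OF t gp(2) gpath_rev[OF gp(1)]])
    then show ?thesis by simp
  qed
qed

lemma finite_segment_lists:
  assumes g: "graph V E" shows "finite {p. segment E p}"
proof -
  have "{p. segment E p} \<subseteq> {xs. set xs \<subseteq> V \<and> length xs \<le> card V}"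
    using walk_set_subset[OF g] length_gpath_le_card[OF g]
    unfolding segment_def gpath_def by auto
  moreover have "finite V" using g unfolding graph_def by simp
  ultimately show ?thesis using finite_lists_length_le finite_subset by blast
qed

lemma card_segment_lists:
  assumes t: "tree V E"
  shows "card {p. segment E p} = (\<Sum>z \<in> {z \<in> V. deg E z \<noteq> 2}. deg E z)"
proof -
  have g: "graph V E" using t by (rule tree_graph)
  let ?N = "{z \<in> V. deg E z \<noteq> 2}"
  have "bij_betw (\<lambda>p. (p ! 0, p ! 1)) {p. segment E p} (Sigma ?N (nbrs E))"
  proof (rule bij_betwI')
    fix p q assume "p \<in> {p. segment E p}" "q \<in> {p. segment E p}"
    then show "((p ! 0, p ! 1) = (q ! 0, q ! 1)) = (p = q)" using segment_eqI[OF g] by auto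
  next
    fix p assume "p \<in> {p. segment E p}"
    then have p: "segment E p" by simp
    have e: "{p ! 0, p ! 1} \<in> E" using p unfolding segment_def gpath_def walk_def by simp
    have "deg E (p ! 0) \<noteq> 2"
      using p hd_last_conv_nth[OF segment_nonempty[OF p]] unfolding segment_def by simp
    then show "(p ! 0, p ! 1) \<in> Sigma ?N (nbrs E)"
      using e graph_edgeD[OF g e] unfolding nbrs_def by simp
  next
    fix zy assume "zy \<in> Sigma ?N (nbrs E)"
    then obtain z y where zy: "zy = (z, y)" "{z, y} \<in> E" "deg E z \<noteq> 2"
      unfolding nbrs_def by auto
    obtain p where "segment E p" "p ! 0 = z" "p ! 1 = y" by (rule segment_exists[OF t zy(2,3)])
    then show "\<exists>p \<in> {p. segment E p}. zy = (p ! 0, p ! 1)" using zy(1) by auto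
  qed
  then have "card {p. segment E p} = card (Sigma ?N (nbrs E))" by (rule bij_betw_same_card)
  also have "\<dots> = (\<Sum>z \<in> ?N. card (nbrs E z))"
    using g finite_nbrs[OF g] unfolding graph_def by simp
  also have "\<dots> = (\<Sum>z \<in> ?N. deg E z)" using deg_eq_card_nbrs[OF g] by simp
  finally show ?thesis .
qed

lemma card_segments:
  assumes t: "tree V E"
  shows "2 * card (segments E) = (\<Sum>z \<in> {z \<in> V. deg E z \<noteq> 2}. deg E z)"
proof -
  let ?L = "{p. segment E p}"
  define fib where "fib S = {p \<in> ?L. set p = S}" for S
  have fin: "finite ?L" by (rule finite_segment_lists[OF tree_graph[OF t]])
  have seg: "segments E = set ` ?L" unfolding segments_def by auto
  have L: "?L = (\<Union>S \<in> segments E. fib S)" unfolding fib_def seg by auto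
  have two: "card (fib S) = 2" if "S \<in> segments E" for S
  proof -
    obtain p where p: "segment E p" "S = set p" using \<open>S \<in> segments E\<close> seg by auto
    have "fib S = {p, rev p}"
      using segment_set_eq[OF t p(1)] segment_rev[OF p(1)] p unfolding fib_def by auto
    moreover have "rev p \<noteq> p"
      using segment_hd_neq_last[OF p(1)] by (metis hd_rev)
    ultimately show ?thesis by simp
  qed
  have "card ?L = (\<Sum>S \<in> segments E. card (fib S))"
    unfolding L using fin seg by (intro card_UN_disjoint) (auto simp: fib_def)
  also have "\<dots> = 2 * card (segments E)" using two by simp
  finally show ?thesis using card_segment_lists[OF t] by simp
qed

lemma card_segments_eq:
  assumes t: "tree V E" and t': "tree V E'"
    and d2: "\<And>z. z \<in> V \<Longrightarrow> deg E' z = 2 \<longleftrightarrow> deg E z = 2"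
    and s: "(\<Sum>z \<in> {z \<in> V. deg E z \<noteq> 2}. deg E' z) = (\<Sum>z \<in> {z \<in> V. deg E z \<noteq> 2}. deg E z)"
  shows "card (segments E') = card (segments E)"
proof -
  have "{z \<in> V. deg E' z \<noteq> 2} = {z \<in> V. deg E z \<noteq> 2}" using d2 by blast
  then show ?thesis using card_segments[OF t] card_segments[OF t'] s by simp
qed

section \<open>Transformations increasing M2\<close>

definition edge_weight :: "'a set set \<Rightarrow> 'a set \<Rightarrow> nat" where
  "edge_weight E e = (\<Prod>v \<in> e. deg E v)"

lemma M2_eq_sum_edge_weight: "M2 E = sum (edge_weight E) E"
  unfolding M2_def edge_weight_def ..

lemma edge_weight_doubleton: "x \<noteq> y \<Longrightarrow> edge_weight E {x, y} = deg E x * deg E y"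
  unfolding edge_weight_def by simp

lemma sum_edge_weight_mono:
  assumes "\<And>z. z \<noteq> v \<Longrightarrow> deg E z \<le> deg E' z" and "\<forall>e \<in> R. v \<notin> e"
  shows "sum (edge_weight E) R \<le> sum (edge_weight E') R"
  unfolding edge_weight_def
proof (intro sum_mono prod_mono conjI)
  fix e z assume "e \<in> R" "z \<in> e"
  then show "deg E z \<le> deg E' z" using assms by (intro assms(1)) blast
qed simp

definition M2_improvable :: "'a set \<Rightarrow> 'a set set \<Rightarrow> bool" where
  "M2_improvable V E \<longleftrightarrow>
    (\<exists>E'. chemical_tree V E' \<and> card (segments E') = card (segments E) \<and> M2 E < M2 E')"

lemma rearrangement_nat:
  assumes "(a::nat) < b" "c < d" shows "a * d + b * c < a * c + b * d"
proof -
  have "a * (d - c) < b * (d - c)" using assms by simp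
  moreover have "a * (d - c) = a * d - a * c" "b * (d - c) = b * d - b * c"
    by (simp_all add: diff_mult_distrib2)
  moreover have "a * c \<le> a * d" "b * c \<le> b * d" using assms by simp_all
  ultimately show ?thesis by linarith
qed

definition switch_edges :: "'a set set \<Rightarrow> 'a \<Rightarrow> 'a \<Rightarrow> 'a \<Rightarrow> 'a \<Rightarrow> 'a set set" where
  "switch_edges E u v q b = insert {u, b} (insert {q, v} (E - {{u, v}, {q, b}}))"

lemma switch_edges_admissible:
  assumes t: "tree V E" and uv: "{u, v} \<in> E" and qb: "{q, b} \<in> E"
    and r: "reach (E - {{q, b}} - {{u, v}}) u q" and uq: "u \<noteq> q"
  shows "q \<noteq> v" "u \<noteq> b" "{q, v} \<notin> E" "{u, b} \<notin> E" "v \<noteq> b"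
proof -
  have rU: "reach (E - {{u, v}}) u q" by (rule reach_mono[OF r]) auto
  have rQ: "reach (E - {{q, b}}) q u" by (rule reach_sym[OF reach_mono[OF r]]) auto
  show qv: "q \<noteq> v" using rU tree_edge_bridge[OF t uv] by auto
  show ub: "u \<noteq> b" using rQ tree_edge_bridge[OF t qb] by auto
  show nqv: "{q, v} \<notin> E"
  proof
    assume "{q, v} \<in> E"
    then have "{q, v} \<in> E - {{u, v}}" using uq qv by (auto simp: doubleton_eq_iff)
    then have "reach (E - {{u, v}}) u v" using reach_trans[OF rU reach_edge] by simp
    then show False using tree_edge_bridge[OF t uv] by simp
  qed
  show "{u, b} \<notin> E"
  proof
    assume "{u, b} \<in> E"
    then have "{u, b} \<in> E - {{q, b}}" using uq ub by (auto simp: doubleton_eq_iff)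
    then have "reach (E - {{q, b}}) q b" using reach_trans[OF rQ reach_edge] by simp
    then show False using tree_edge_bridge[OF t qb] by simp
  qed
  show "v \<noteq> b" using nqv qb by auto
qed

text \<open>A switch is the composition of two edge moves.\<close>

lemma tree_switch_edges:
  assumes t: "tree V E" and uv: "{u, v} \<in> E" and qb: "{q, b} \<in> E"
    and r: "reach (E - {{q, b}} - {{u, v}}) u q" and uq: "u \<noteq> q"
  shows "tree V (switch_edges E u v q b)" and "deg (switch_edges E u v q b) = deg E"
proof -
  note adm = switch_edges_admissible[OF assms]
  have g: "graph V E" using t by (rule tree_graph)
  have fin: "finite E" using g by (rule graph_finite_edges)
  have ne: "u \<noteq> v" "q \<noteq> b" using graph_edgeD[OF g uv] graph_edgeD[OF g qb] by simp_all
  have "{u, b} \<noteq> {u, v}" "{u, v} \<noteq> {q, b}" "{q, v} \<noteq> {u, b}"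
    using adm uq ne by (simp_all add: doubleton_eq_iff)
  define E1 where "E1 = move_edge E q b u"
  have eq: "switch_edges E u v q b = move_edge E1 u v q"
    using \<open>{u, b} \<noteq> {u, v}\<close> unfolding switch_edges_def E1_def move_edge_def by blast
  have rQ: "reach (E - {{q, b}}) q u" by (rule reach_sym[OF reach_mono[OF r]]) auto
  have t1: "tree V E1" unfolding E1_def by (rule tree_move_edge[OF t qb rQ])
  have uv1: "{u, v} \<in> E1" using uv \<open>{u, v} \<noteq> {q, b}\<close> unfolding E1_def move_edge_def by simp
  have qv1: "{q, v} \<notin> E1" using adm(3) \<open>{q, v} \<noteq> {u, b}\<close> unfolding E1_def move_edge_def by simp
  have "reach (E1 - {{u, v}}) u q" by (rule reach_mono[OF r]) (auto simp: E1_def move_edge_def)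
  then show "tree V (switch_edges E u v q b)" unfolding eq by (rule tree_move_edge[OF t1 uv1])
  have fin1: "finite E1" using fin unfolding E1_def move_edge_def by simp
  have d1: "deg E1 z =
      (if z = q then deg E z - 1 else if z = u then deg E z + 1 else deg E z)" for z
    unfolding E1_def using deg_move_edge[OF fin qb adm(4) ne(2) adm(2) uq[symmetric]] .
  have d2: "deg (move_edge E1 u v q) z =
      (if z = u then deg E1 z - 1 else if z = q then deg E1 z + 1 else deg E1 z)" for z
    using deg_move_edge[OF fin1 uv1 qv1 ne(1) adm(1) uq] .
  have "0 < deg E q" using deg_pos[OF g qb] .
  then show "deg (switch_edges E u v q b) = deg E" unfolding eq using d1 d2 uq by auto
qed

lemma M2_switch_edges:
  assumes t: "tree V E" and uv: "{u, v} \<in> E" and qb: "{q, b} \<in> E"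
    and r: "reach (E - {{q, b}} - {{u, v}}) u q" and uq: "u \<noteq> q"
  shows "M2 (switch_edges E u v q b) + deg E u * deg E v + deg E q * deg E b =
    M2 E + deg E u * deg E b + deg E q * deg E v"
proof -
  note adm = switch_edges_admissible[OF assms]
  have g: "graph V E" using t by (rule tree_graph)
  have ne: "u \<noteq> v" "q \<noteq> b" using graph_edgeD[OF g uv] graph_edgeD[OF g qb] by simp_all
  let ?F = "E - {{u, v}, {q, b}}"
  have fin: "finite ?F" using graph_finite_edges[OF g] by simp
  have E: "E = insert {u, v} (insert {q, b} ?F)" using uv qb by auto
  have "M2 (switch_edges E u v q b) = sum (edge_weight E) (switch_edges E u v q b)"
    unfolding M2_eq_sum_edge_weight edge_weight_def tree_switch_edges(2)[OF assms] ..
  also have "\<dots> = deg E u * deg E b + deg E q * deg E v + sum (edge_weight E) ?F"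
    unfolding switch_edges_def using fin adm ne uq
    by (simp add: edge_weight_doubleton doubleton_eq_iff)
  finally show ?thesis
    unfolding M2_eq_sum_edge_weight using fin ne uq adm
    by (subst (2) E) (simp add: edge_weight_doubleton doubleton_eq_iff)
qed

lemma switch_M2_improvable:
  assumes t: "tree V E" and ch: "\<forall>z \<in> V. deg E z \<le> 4"
    and uv: "{u, v} \<in> E" and qb: "{q, b} \<in> E"
    and r: "reach (E - {{q, b}} - {{u, v}}) u q"
    and du: "deg E u < deg E q" and db: "deg E b < deg E v"
  shows "M2_improvable V E"
proof -
  have uq: "u \<noteq> q" using du by auto
  let ?E' = "switch_edges E u v q b"
  have "chemical_tree V ?E'"
    using tree_switch_edges[OF t uv qb r uq] ch unfolding chemical_tree_def by simp
  moreover have "card (segments ?E') = card (segments E)"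
    using card_segments_eq[OF t tree_switch_edges(1)[OF t uv qb r uq]]
      tree_switch_edges(2)[OF t uv qb r uq] by simp
  moreover have "M2 E < M2 ?E'"
    using M2_switch_edges[OF t uv qb r uq] rearrangement_nat[OF du db] by simp
  ultimately show ?thesis unfolding M2_improvable_def by blast
qed

text \<open>Once the edge uv is deleted, u's side of the tree contains no neighbour of v but u.\<close>

lemma tree_move_branch_admissible:
  assumes t: "tree V E" and uv: "{u, v} \<in> E" and rt: "reach {e \<in> E. v \<notin> e} u t"
    and tu: "t \<noteq> u" and vy: "{v, y} \<in> E" "y \<noteq> u"
  shows "{u, y} \<notin> E" "t \<noteq> y" "{t, y} \<notin> E"
proof -
  have far: "z = u" if "reach (E - {{u, v}}) u z" "{z, v} \<in> E" for z
  proof (rule ccontr)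
    assume "z \<noteq> u"
    then have "{z, v} \<in> E - {{u, v}}" using that(2) by (auto simp: doubleton_eq_iff)
    then have "reach (E - {{u, v}}) u v" using reach_trans[OF that(1) reach_edge] by simp
    then show False using tree_edge_bridge[OF t uv] by simp
  qed
  have yv: "{y, v} \<in> E" using vy(1) by (simp add: insert_commute)
  have g: "graph V E" using t by (rule tree_graph)
  have "y \<noteq> v" using graph_edgeD[OF g vy(1)] by auto
  show "{u, y} \<notin> E"
  proof
    assume "{u, y} \<in> E"
    then have "reach (E - {{u, v}}) u y"
      using \<open>y \<noteq> v\<close> by (intro reach_edge) (auto simp: doubleton_eq_iff)
    then show False using far yv vy(2) by blast
  qed
  have rt': "reach (E - {{u, v}}) u t" by (rule reach_mono[OF rt]) auto
  then show "t \<noteq> y" using far yv vy(2) tu by blast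
  have tv: "t \<noteq> v" using reach_avoiding_neq[OF rt] graph_edgeD[OF g uv] by simp
  show "{t, y} \<notin> E"
  proof
    assume "{t, y} \<in> E"
    then have "{t, y} \<in> E - {{u, v}}" using tu tv by (auto simp: doubleton_eq_iff)
    then have "reach (E - {{u, v}}) u y" using reach_trans[OF rt' reach_edge] by simp
    then show False using far yv vy(2) by blast
  qed
qed

lemma tree_move_branches:
  assumes t: "tree V E" and uv: "{u, v} \<in> E" and rt: "reach {e \<in> E. v \<notin> e} u t"
    and tu: "t \<noteq> u" and vy: "{v, y1} \<in> E" "{v, y2} \<in> E" "y1 \<noteq> u" "y2 \<noteq> u" "y1 \<noteq> y2"
  defines "E2 \<equiv> move_edge (move_edge E v y1 u) v y2 t"
  shows "tree V E2"
    and "E2 = insert {u, y1} (insert {t, y2} (E - {{v, y1}, {v, y2}}))"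
    and "deg E2 z = (if z = v then deg E z - 2 else if z = u \<or> z = t then deg E z + 1 else deg E z)"
proof -
  note adm1 = tree_move_branch_admissible[OF t uv rt tu vy(1,3)]
  note adm2 = tree_move_branch_admissible[OF t uv rt tu vy(2,4)]
  have g: "graph V E" using t by (rule tree_graph)
  have fin: "finite E" using g by (rule graph_finite_edges)
  have ne: "u \<noteq> v" "v \<noteq> y1" "v \<noteq> y2" using graph_edgeD[OF g] uv vy by blast+
  have tv: "t \<noteq> v" using reach_avoiding_neq[OF rt ne(1)] .
  define E1 where "E1 = move_edge E v y1 u"
  have "{u, v} \<noteq> {v, y1}" "{v, y2} \<noteq> {v, y1}" "{t, y2} \<noteq> {u, y1}" "{u, y1} \<noteq> {v, y2}"
    using ne(1,2) vy(5) tu adm1(2) \<open>y1 \<noteq> u\<close> \<open>y2 \<noteq> u\<close> by (auto simp: doubleton_eq_iff)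
  note neqs = this
  have "reach (E - {{v, y1}}) v u"
    using uv neqs(1) by (intro reach_edge) (auto simp: insert_commute)
  then have t1: "tree V E1" unfolding E1_def by (rule tree_move_edge[OF t vy(1)])
  have vy2: "{v, y2} \<in> E1" using vy(2) neqs(2) unfolding E1_def move_edge_def by simp
  have ty2: "{t, y2} \<notin> E1" using adm2(3) neqs(3) unfolding E1_def move_edge_def by simp
  have "{v, u} \<noteq> {v, y2}" using \<open>y2 \<noteq> u\<close> by (auto simp: doubleton_eq_iff)
  then have "reach (E1 - {{v, y2}}) v u"
    using uv neqs(1) unfolding E1_def move_edge_def
    by (intro reach_edge) (simp add: insert_commute)
  moreover have "reach (E1 - {{v, y2}}) u t"
    by (rule reach_mono[OF rt]) (auto simp: E1_def move_edge_def)
  ultimately have "reach (E1 - {{v, y2}}) v t" by (rule reach_trans)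
  then show "tree V E2" unfolding E2_def E1_def[symmetric] by (rule tree_move_edge[OF t1 vy2])
  show "E2 = insert {u, y1} (insert {t, y2} (E - {{v, y1}, {v, y2}}))"
    using neqs(4) unfolding E2_def move_edge_def by blast
  have fin1: "finite E1" using fin unfolding E1_def move_edge_def by simp
  have d1: "deg E1 z =
      (if z = v then deg E z - 1 else if z = u then deg E z + 1 else deg E z)" for z
    unfolding E1_def
    using deg_move_edge[OF fin vy(1) adm1(1) ne(2) vy(3)[symmetric] ne(1)[symmetric]] .
  have d2: "deg E2 z =
      (if z = v then deg E1 z - 1 else if z = t then deg E1 z + 1 else deg E1 z)" for z
    unfolding E2_def E1_def[symmetric]
    using deg_move_edge[OF fin1 vy2 ty2 ne(3) adm2(2) tv[symmetric]] .
  show "deg E2 z = (if z = v then deg E z - 2 else if z = u \<or> z = t then deg E z + 1 else deg E z)"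
    using d1 d2 ne(1) tv tu by auto
qed

lemma M2_lt_move_branches:
  assumes g: "graph V E"
    and E2: "E2 = insert {u, y1} (insert {t, y2} (E - {{v, y1}, {v, y2}}))"
    and new: "{u, y1} \<notin> E" "{t, y2} \<notin> E" "u \<noteq> t" "t \<noteq> y2"
    and nv: "nbrs E v = {u, y1, y2}" "y1 \<noteq> y2" "y1 \<noteq> u" "y2 \<noteq> u"
    and nu: "nbrs E u = {v, w, x}" "v \<noteq> w" "v \<noteq> x" "w \<noteq> x"
    and du: "deg E u = 3" "deg E2 u = 4" and dv: "deg E v = 3" "deg E2 v = 1"
    and dt: "deg E2 t = 4" and dw: "3 \<le> deg E w"
    and mono: "\<And>z. z \<noteq> v \<Longrightarrow> deg E z \<le> deg E2 z"
  shows "M2 E < M2 E2"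
proof -
  have edges: "{v, y1} \<in> E" "{v, y2} \<in> E" "{u, v} \<in> E" "{u, w} \<in> E" "{u, x} \<in> E"
    using nv(1) nu(1) unfolding nbrs_def by (auto simp: insert_commute)
  have ne: "u \<noteq> v" "u \<noteq> w" "u \<noteq> x" "v \<noteq> y1" "v \<noteq> y2"
    using graph_edgeD[OF g] edges by blast+
  have neqs: "{u, v} \<noteq> {v, y1}" "{u, v} \<noteq> {v, y2}" "{u, w} \<noteq> {v, y1}" "{u, w} \<noteq> {v, y2}"
    "{u, x} \<noteq> {v, y1}" "{u, x} \<noteq> {v, y2}" "{u, v} \<noteq> {u, w}" "{u, v} \<noteq> {u, x}" "{u, w} \<noteq> {u, x}"
    "{v, y1} \<noteq> {v, y2}" "{u, y1} \<noteq> {t, y2}"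
    using ne nv(2-4) nu(2-4) new(3) by (auto simp: doubleton_eq_iff)
  define C where "C = E - {{v, y1}, {v, y2}}"
  define D where "D = {{u, v}, {u, w}, {u, x}}"
  define R where "R = C - D"
  have fin: "finite E" using g by (rule graph_finite_edges)
  then have finC: "finite C" unfolding C_def by simp
  have DC: "D \<subseteq> C" using edges neqs unfolding D_def C_def by simp
  have sumC: "sum f C = f {u, v} + f {u, w} + f {u, x} + sum f R" for f :: "'a set \<Rightarrow> nat"
    using sum.subset_diff[OF DC finC, of f] neqs(7-9) unfolding R_def D_def by simp
  have "{{v, y1}, {v, y2}} \<subseteq> E" using edges by simp
  from sum.subset_diff[OF this fin, of "edge_weight E"]
  have "M2 E = edge_weight E {v, y1} + edge_weight E {v, y2} + sum (edge_weight E) C"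
    unfolding M2_eq_sum_edge_weight C_def using neqs(10) by simp
  then have M2E: "M2 E = 3 * deg E y1 + 3 * deg E y2 + 9 + 3 * deg E w + 3 * deg E x
      + sum (edge_weight E) R"
    unfolding sumC using ne du dv by (simp add: edge_weight_doubleton)
  have "{u, y1} \<notin> insert {t, y2} C" "{t, y2} \<notin> C"
    using new neqs(11) unfolding C_def by simp_all
  moreover have E2C: "E2 = insert {u, y1} (insert {t, y2} C)" unfolding E2 C_def ..
  ultimately have "M2 E2 = edge_weight E2 {u, y1} + edge_weight E2 {t, y2} + sum (edge_weight E2) C"
    unfolding M2_eq_sum_edge_weight using finC by (subst (2) E2C) simp
  then have M2E2: "M2 E2 = 4 * deg E2 y1 + 4 * deg E2 y2 + 4 + 4 * deg E2 w + 4 * deg E2 x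
      + sum (edge_weight E2) R"
    unfolding sumC using nv(3) new(3,4) ne du dv dt by (simp add: edge_weight_doubleton)
  have "\<forall>e \<in> R. v \<notin> e"
  proof (intro ballI notI)
    fix e assume "e \<in> R" "v \<in> e"
    then have e: "e \<in> E" "e \<notin> {{v, y1}, {v, y2}, {v, u}}"
      unfolding R_def C_def D_def by (auto simp: insert_commute)
    obtain y where "e = {v, y}" "y \<in> nbrs E v" by (rule graph_edge_cases[OF g e(1) \<open>v \<in> e\<close>])
    then show False using e nv(1) by auto
  qed
  with mono have "sum (edge_weight E) R \<le> sum (edge_weight E2) R" by (rule sum_edge_weight_mono)
  moreover have "deg E y1 \<le> deg E2 y1" "deg E y2 \<le> deg E2 y2"
    "deg E w \<le> deg E2 w" "deg E x \<le> deg E2 x"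
    using mono ne nu(2,3) by auto
  moreover have "0 < deg E y1" "0 < deg E y2" "0 < deg E x"
    using deg_pos[OF g] edges by (metis insert_commute)+
  ultimately show ?thesis using M2E M2E2 dw by linarith
qed

lemma move_branches_M2_improvable:
  assumes t: "tree V E" and ch: "\<forall>z \<in> V. deg E z \<le> 4"
    and uv: "{u, v} \<in> E" and uw: "{u, w} \<in> E" and vw: "v \<noteq> w"
    and du: "deg E u = 3" and dv: "deg E v = 3" and dw: "3 \<le> deg E w"
    and dt: "deg E t = 3" and tu: "t \<noteq> u" and rt: "reach {e \<in> E. v \<notin> e} u t"
  shows "M2_improvable V E"
proof -
  have g: "graph V E" using t by (rule tree_graph)
  have "u \<in> nbrs E v" using uv unfolding nbrs_def by (simp add: insert_commute)
  then obtain y1 y2 where nv: "nbrs E v = {u, y1, y2}" "u \<noteq> y1" "u \<noteq> y2" "y1 \<noteq> y2"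
    using deg3_nbrsE[OF g dv] by blast
  have "v \<in> nbrs E u" "w \<in> nbrs E u" using uv uw unfolding nbrs_def by simp_all
  obtain x where nu: "nbrs E u = {v, w, x}" "v \<noteq> x" "w \<noteq> x"
  proof -
    obtain b c where "nbrs E u = {v, b, c}" "v \<noteq> b" "v \<noteq> c" "b \<noteq> c"
      using deg3_nbrsE[OF g du \<open>v \<in> nbrs E u\<close>] by blast
    then show thesis using that \<open>w \<in> nbrs E u\<close> vw by (cases "w = b") (auto simp: insert_commute)
  qed
  have vy: "{v, y1} \<in> E" "{v, y2} \<in> E" using nv(1) unfolding nbrs_def by auto
  have uvV: "u \<in> V" "v \<in> V" "u \<noteq> v" using graph_edgeD[OF g uv] by simp_all
  have tV: "t \<in> V" using reach_in_V[OF g reach_mono[OF rt] uvV(1)] by auto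
  have tv: "t \<noteq> v" using reach_avoiding_neq[OF rt] graph_edgeD[OF g uv] by simp
  define E2 where "E2 = move_edge (move_edge E v y1 u) v y2 t"
  note mv = tree_move_branches[OF t uv rt tu vy nv(2,3)[symmetric] nv(4), folded E2_def]
  note adm1 = tree_move_branch_admissible[OF t uv rt tu vy(1) nv(2)[symmetric]]
  note adm2 = tree_move_branch_admissible[OF t uv rt tu vy(2) nv(3)[symmetric]]
  have d2: "deg E2 u = 4" "deg E2 v = 1" "deg E2 t = 4"
    using mv(3) du dv dt tu tv uvV(3) by simp_all
  have mono: "deg E z \<le> deg E2 z" if "z \<noteq> v" for z using mv(3) that by simp
  have "chemical_tree V E2"
    using mv(1) ch mv(3) d2 unfolding chemical_tree_def by auto
  txt \<open>The degrees 3, 3, 3 of u, v, t become 4, 1, 4: no vertex gets degree 2 and the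
    degree sum over the vertices of degree other than 2 is unchanged.\<close>
  moreover have "card (segments E2) = card (segments E)"
  proof (rule card_segments_eq[OF t mv(1)])
    show "deg E2 z = 2 \<longleftrightarrow> deg E z = 2" for z using mv(3) du dv dt by auto
    let ?N = "{z \<in> V. deg E z \<noteq> 2}"
    have "deg E2 z + (if z = v then 2 else 0) =
        deg E z + (if z = u then 1 else 0) + (if z = t then 1 else 0)" for z
      using mv(3)[of z] dv tu tv uvV(3) by auto
    then have "(\<Sum>z \<in> ?N. deg E2 z + (if z = v then 2 else 0)) =
        (\<Sum>z \<in> ?N. deg E z + (if z = u then 1 else 0) + (if z = t then 1 else 0))" by simp
    moreover have "finite ?N" using g unfolding graph_def by simp
    moreover have "u \<in> ?N" "v \<in> ?N" "t \<in> ?N" using uvV tV du dv dt by simp_all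
    ultimately show "(\<Sum>z \<in> ?N. deg E2 z) = (\<Sum>z \<in> ?N. deg E z)"
      by (simp add: sum.distrib)
  qed
  moreover have "M2 E < M2 E2"
    by (rule M2_lt_move_branches[OF g mv(2) adm1(1) adm2(3) tu[symmetric] adm2(2)
          nv(1,4) nv(2,3)[symmetric] nu(1) vw nu(2,3) du(1) d2(1) dv d2(2) d2(3) dw mono])
  ultimately show ?thesis unfolding M2_improvable_def by blast
qed

lemma ex_boundary_step:
  fixes Q :: "nat \<Rightarrow> bool"
  assumes "Q a" "\<not> Q b" "a \<le> b"
  shows "\<exists>j. a \<le> j \<and> j < b \<and> Q j \<and> \<not> Q (Suc j)"
  using assms(3,2)
proof (induction b rule: dec_induct)
  case base
  then show ?case using assms(1) by simp
next
  case (step b)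
  then show ?case by (cases "Q b") (auto intro: less_SucI)
qed

lemma deg4_nbr_M2_improvable:
  assumes t: "tree V E" and ch: "\<forall>z \<in> V. deg E z \<le> 4"
    and uv: "{u, v} \<in> E" and uw: "{u, w} \<in> E" and vw: "v \<noteq> w"
    and du: "deg E u = 3" and dv: "3 \<le> deg E v" and dw: "deg E w = 4"
  shows "M2_improvable V E"
proof -
  have g: "graph V E" using t by (rule tree_graph)
  obtain P where P: "gpath E P" "2 \<le> length P" "P ! 0 = u" "P ! 1 = w" "deg E (last P) = 1"
    using tree_leaf_path[OF t uw] by blast
  have dP: "distinct P" and wP: "\<forall>i. Suc i < length P \<longrightarrow> {P ! i, P ! Suc i} \<in> E"
    using P(1) unfolding gpath_def walk_def by simp_all
  have "v \<notin> set P" by (rule tree_gpath_avoids_nbr[OF t P(1,3,4) uv vw])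
  then have avoid: "{P ! j, P ! Suc j} \<in> {e \<in> E. v \<notin> e}" if "Suc j < length P" for j
    using wP that by (auto dest: nth_mem)
  have "P \<noteq> []" using P(2) by auto
  then have "deg E (P ! (length P - 1)) \<noteq> 4" using P(5) by (simp add: last_conv_nth)
  then have "\<exists>j. 1 \<le> j \<and> j < length P - 1 \<and> deg E (P ! j) = 4 \<and> deg E (P ! Suc j) \<noteq> 4"
    using P(2,4) dw by (intro ex_boundary_step) simp_all
  then obtain j0
    where j0: "1 \<le> j0" "j0 < length P - 1" "deg E (P ! j0) = 4" "deg E (P ! Suc j0) \<noteq> 4"
    by blast
  then have sj: "Suc j0 < length P" by simp
  define q where "q = P ! j0"
  define b where "b = P ! Suc j0"
  have qb: "{q, b} \<in> E" unfolding q_def b_def using wP sj by simp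
  then have "b \<in> V" using graph_edgeD[OF g] by blast
  then have db: "deg E b \<le> 3" using ch j0(4) unfolding b_def by fastforce
  show ?thesis
  proof (cases "deg E b < deg E v")
    case True
    have "{P ! j, P ! Suc j} \<in> E - {{q, b}} - {{u, v}}" if "j < j0" for j
      using avoid[of j] distinct_edges_inj[OF dP, of j j0] that sj unfolding q_def b_def by auto
    then have "reach (E - {{q, b}} - {{u, v}}) (P ! 0) (P ! j0)" by (intro reach_nth) auto
    then have "reach (E - {{q, b}} - {{u, v}}) u q" using P(3) unfolding q_def by simp
    then show ?thesis
      using switch_M2_improvable[OF t ch uv qb] du j0(3) True unfolding q_def by simp
  next
    case False
    then have "deg E v = 3" "deg E b = 3" using dv db by simp_all
    moreover have "b \<noteq> u"
      using nth_eq_iff_index_eq[OF dP sj, of 0] P(3) \<open>P \<noteq> []\<close> unfolding b_def by simp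
    moreover have "reach {e \<in> E. v \<notin> e} (P ! 0) (P ! Suc j0)"
      using avoid sj by (intro reach_nth) auto
    ultimately show ?thesis
      using move_branches_M2_improvable[OF t ch uv uw vw du _ _ _ _, of b] dw P(3)
      unfolding b_def by simp
  qed
qed

theorem lemma6:
  fixes V :: "'a set" and E :: "'a set set" and n k :: nat and u :: 'a
  assumes "3 \<le> k" and "k \<le> n - 1"
    and "in_CT V E n k"
    and "\<forall>(V' :: 'a set) E'. in_CT V' E' n k \<longrightarrow> M2 E' \<le> M2 E"
    and "u \<in> V" and "deg E u = 3"
  shows "card {w. {u, w} \<in> E \<and> deg E w > 2} \<le> 1"
proof (rule ccontr)
  assume two: "\<not> card {w. {u, w} \<in> E \<and> deg E w > 2} \<le> 1"
  have t: "tree V E" and ch: "\<forall>z \<in> V. deg E z \<le> 4"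
    using assms(3) unfolding in_CT_def chemical_tree_def by auto
  have g: "graph V E" using t by (rule tree_graph)
  have "\<not> M2_improvable V E"
    using assms(3,4) unfolding M2_improvable_def in_CT_def by (metis not_le)
  have "{w. {u, w} \<in> E \<and> deg E w > 2} \<subseteq> nbrs E u" unfolding nbrs_def by auto
  then have "finite {w. {u, w} \<in> E \<and> deg E w > 2}" using finite_subset finite_nbrs[OF g] by blast
  then obtain v w where v: "{u, v} \<in> E" "2 < deg E v" and w: "{u, w} \<in> E" "2 < deg E w"
    and vw: "v \<noteq> w"
    using two card_le_Suc0_iff_eq[of "{w. {u, w} \<in> E \<and> deg E w > 2}"] by auto
  have "deg E v \<le> 4" "deg E w \<le> 4" using ch graph_edgeD[OF g] v w by blast+
  then consider "deg E w = 4" | "deg E v = 4" | "deg E v = 3" "deg E w = 3" using v w by linarith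
  then have "M2_improvable V E"
  proof cases
    case 1
    then show ?thesis using deg4_nbr_M2_improvable[OF t ch v(1) w(1) vw] assms(6) v(2) by simp
  next
    case 2
    then show ?thesis
      using deg4_nbr_M2_improvable[OF t ch w(1) v(1) vw[symmetric]] assms(6) w(2) by simp
  next
    case 3
    have "v \<notin> {u, w}" using vw graph_edgeD[OF g v(1)] by auto
    then have "reach {e \<in> E. v \<notin> e} u w" using w(1) by (intro reach_edge) simp
    then show ?thesis using move_branches_M2_improvable[OF t ch v(1) w(1) vw assms(6) 3(1) _ 3(2)]
        graph_edgeD[OF g w(1)] 3(2) by auto
  qed
  with \<open>\<not> M2_improvable V E\<close> show False by contradiction
qed

end
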